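(* Affine rigidity in $\mathbb{R}^d$ is a generic property of hypergraphs: for every hypergraph $\Theta$, either every generic framework $(p,\Theta)$ with $p:V(\Theta)\to\mathbb{R}^d$ is affinely rigid in $\mathbb{R}^d$, or no generic such framework is affinely rigid in $\mathbb{R}^d$.
   Context: A hypergraph $\Theta$ has a finite vertex set $V$ and hyperedges that are subsets of $V$; a framework $(p,\Theta)$ pairs it with a configuration $p:V\to\mathbb{R}^d$. A configuration is generic if its coordinates satisfy no nonzero polynomial equation with rational coefficients. Frameworks $(p,\Theta),(q,\Theta)$ in $\mathbb{R}^d$ are affinely equivalent if for each hyperedge $h$ there is an invertible affine map $g_h$ of $\mathbb{R}^d$ with $g_h(p(u))=q(u)$ for $u\in h$, and affinely congruent if a single invertible affine map $g$ satisfies $g(p(u))=q(u)$ for all $u\in V$. $(p,\Theta)$ is affinely rigid in $\mathbb{R}^d$ if every framework in $\mathbb{R}^d$ affinely equivalent to it is affinely congruent to it. *)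

theory Defs
  imports "HOL-Analysis.Analysis" "HOL-Library.Poly_Mapping"
begin

text \<open>Multivariate polynomials with rational coefficients in variables indexed by 'i:
  finitely supported maps from monomials (finitely supported exponent vectors) to rationals.\<close>
type_synonym 'i rat_mpoly = "('i \<Rightarrow>\<^sub>0 nat) \<Rightarrow>\<^sub>0 rat"

definition mpoly_eval :: "'i rat_mpoly \<Rightarrow> ('i \<Rightarrow> real) \<Rightarrow> real" where
  "mpoly_eval P x = (\<Sum>mon\<in>Poly_Mapping.keys P. of_rat (Poly_Mapping.lookup P mon) * (\<Prod>v\<in>Poly_Mapping.keys mon. x v ^ Poly_Mapping.lookup mon v))"

definition generic_config :: "'v set \<Rightarrow> ('v \<Rightarrow> real ^ 'd) \<Rightarrow> bool" where
  "generic_config V p \<longleftrightarrow>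
     (\<forall>P :: ('v \<times> 'd) rat_mpoly.
        P \<noteq> 0 \<and> (\<forall>m\<in>Poly_Mapping.keys P. Poly_Mapping.keys m \<subseteq> V \<times> UNIV) \<longrightarrow>
        mpoly_eval P (\<lambda>(u, k). p u $ k) \<noteq> 0)"

definition invertible_affine :: "(real ^ 'd \<Rightarrow> real ^ 'd) \<Rightarrow> bool" where
  "invertible_affine g \<longleftrightarrow>
     (\<exists>(A :: real ^ 'd ^ 'd) b. invertible A \<and> g = (\<lambda>x. A *v x + b))"

definition affinely_equivalent ::
  "'v set set \<Rightarrow> ('v \<Rightarrow> real ^ 'd) \<Rightarrow> ('v \<Rightarrow> real ^ 'd) \<Rightarrow> bool" where
  "affinely_equivalent E p q \<longleftrightarrow>
     (\<forall>h\<in>E. \<exists>g. invertible_affine g \<and> (\<forall>u\<in>h. g (p u) = q u))"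

definition affinely_congruent ::
  "'v set \<Rightarrow> ('v \<Rightarrow> real ^ 'd) \<Rightarrow> ('v \<Rightarrow> real ^ 'd) \<Rightarrow> bool" where
  "affinely_congruent V p q \<longleftrightarrow>
     (\<exists>g. invertible_affine g \<and> (\<forall>u\<in>V. g (p u) = q u))"

definition affinely_rigid :: "'v set \<Rightarrow> 'v set set \<Rightarrow> ('v \<Rightarrow> real ^ 'd) \<Rightarrow> bool" where
  "affinely_rigid V E p \<longleftrightarrow>
     (\<forall>q :: 'v \<Rightarrow> real ^ 'd. affinely_equivalent E p q \<longrightarrow> affinely_congruent V p q)"

end

theory Submission
  imports Defs "Jordan_Normal_Form.Determinant"
begin

text \<open>A generic configuration satisfies no nontrivial polynomial identity with rational
  coefficients, so a property of configurations that is the nonvanishing of such a polynomial in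
  the coordinates holds either for all generic configurations or for none.

  With at most d + 1 vertices, generic configurations are affinely independent, hence affine images
  of one another, and affine rigidity is invariant under invertible affine maps.

  Otherwise fix a set B of d + 1 vertices, affinely independent for generic p. Call r a flex if on
  every hyperedge it agrees with an affine function of p. Perturbing p by a flex that is not globally
  affine gives an equivalent framework that is not congruent to it; conversely any equivalent framework
  is itself a flex. So p is rigid iff every flex vanishing on B vanishes everywhere. Recording, for each
  hyperedge with more than d vertices, the affine map realising the flex on it, this says that a
  homogeneous linear system with coefficients polynomial in p has only the trivial solution, i.e. that
  the determinant of its Gram matrix does not vanish.\<close>

(* Jordan_Normal_Form's vector indexing would make every \<open>p u $ k\<close> ambiguous. *)
no_notation Matrix.vec_index (infixl "$" 100)

section \<open>Polynomial functions of a configuration\<close>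

definition monomial_value :: "('i \<Rightarrow> real) \<Rightarrow> ('i \<Rightarrow>\<^sub>0 nat) \<Rightarrow> real" where
  "monomial_value x m = (\<Prod>i\<in>Poly_Mapping.keys m. x i ^ Poly_Mapping.lookup m i)"

lemma monomial_value_superset:
  assumes "finite K" "Poly_Mapping.keys m \<subseteq> K"
  shows "monomial_value x m = (\<Prod>i\<in>K. x i ^ Poly_Mapping.lookup m i)"
  unfolding monomial_value_def
  by (rule prod.mono_neutral_left) (use assms in \<open>auto simp: in_keys_iff\<close>)

lemma monomial_value_add: "monomial_value x (m + n) = monomial_value x m * monomial_value x n"
proof -
  let ?K = "Poly_Mapping.keys m \<union> Poly_Mapping.keys n"
  have "monomial_value x (m + n) = (\<Prod>i\<in>?K. x i ^ Poly_Mapping.lookup (m + n) i)"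
    by (rule monomial_value_superset) (simp_all add: keys_add)
  also have "\<dots> = (\<Prod>i\<in>?K. x i ^ Poly_Mapping.lookup m i * x i ^ Poly_Mapping.lookup n i)"
    by (simp add: lookup_add power_add)
  also have "\<dots> = monomial_value x m * monomial_value x n"
    by (simp add: prod.distrib monomial_value_superset[of ?K])
  finally show ?thesis .
qed

lemma mpoly_eval_superset:
  assumes "finite K" "Poly_Mapping.keys P \<subseteq> K"
  shows "mpoly_eval P x = (\<Sum>m\<in>K. of_rat (Poly_Mapping.lookup P m) * monomial_value x m)"
  unfolding mpoly_eval_def monomial_value_def[symmetric]
  by (rule sum.mono_neutral_left) (use assms in \<open>auto simp: in_keys_iff\<close>)

lemma mpoly_eval_add: "mpoly_eval (P + Q) x = mpoly_eval P x + mpoly_eval Q x"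
  by (simp add: mpoly_eval_superset[of "Poly_Mapping.keys P \<union> Poly_Mapping.keys Q"] keys_add
      lookup_add of_rat_add distrib_right sum.distrib)

lemma mpoly_eval_sum: "finite I \<Longrightarrow> mpoly_eval (\<Sum>i\<in>I. P i) x = (\<Sum>i\<in>I. mpoly_eval (P i) x)"
  by (induct I rule: finite_induct) (auto simp: mpoly_eval_add, simp add: mpoly_eval_def)

lemma mpoly_eval_single: "mpoly_eval (Poly_Mapping.single m c) x = of_rat c * monomial_value x m"
  by (simp add: mpoly_eval_def monomial_value_def)

lemma poly_mapping_sum_single:
  "(\<Sum>m\<in>Poly_Mapping.keys P. Poly_Mapping.single m (Poly_Mapping.lookup P m)) = P"
  by (rule poly_mapping_eqI) (simp add: lookup_sum lookup_single when_def in_keys_iff)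

lemma mpoly_eval_mult: "mpoly_eval (P * Q) x = mpoly_eval P x * mpoly_eval Q x"
proof -
  have eval: "\<And>R. mpoly_eval R x =
      (\<Sum>m\<in>Poly_Mapping.keys R. of_rat (Poly_Mapping.lookup R m) * monomial_value x m)"
    by (rule mpoly_eval_superset) auto
  have "P * Q = (\<Sum>m\<in>Poly_Mapping.keys P. Poly_Mapping.single m (Poly_Mapping.lookup P m)) *
      (\<Sum>n\<in>Poly_Mapping.keys Q. Poly_Mapping.single n (Poly_Mapping.lookup Q n))"
    by (simp only: poly_mapping_sum_single)
  also have "\<dots> = (\<Sum>m\<in>Poly_Mapping.keys P. \<Sum>n\<in>Poly_Mapping.keys Q.
      Poly_Mapping.single (m + n) (Poly_Mapping.lookup P m * Poly_Mapping.lookup Q n))"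
    by (simp add: sum_distrib_left sum_distrib_right mult_single) (rule sum.swap)
  finally show ?thesis
    by (simp add: mpoly_eval_sum mpoly_eval_single monomial_value_add of_rat_mult eval[of P] eval[of Q]
        sum_distrib_left sum_distrib_right mult_ac) (subst sum.swap, simp add: mult_ac)
qed

definition rat_poly_fun :: "'v set \<Rightarrow> (('v \<Rightarrow> real ^ 'd) \<Rightarrow> real) \<Rightarrow> bool" where
  "rat_poly_fun V f \<longleftrightarrow> (\<exists>P :: ('v \<times> 'd) rat_mpoly.
      (\<forall>m\<in>Poly_Mapping.keys P. Poly_Mapping.keys m \<subseteq> V \<times> UNIV) \<and>
      (\<forall>p. f p = mpoly_eval P (\<lambda>(u, k). p u $ k)))"

lemma rat_poly_fun_const: "rat_poly_fun V (\<lambda>p. of_rat c)"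
  unfolding rat_poly_fun_def
  by (rule exI[of _ "Poly_Mapping.single 0 c"]) (auto simp: mpoly_eval_single monomial_value_def)

lemma rat_poly_fun_coord: "u \<in> V \<Longrightarrow> rat_poly_fun V (\<lambda>p. p u $ k)"
  unfolding rat_poly_fun_def
  by (rule exI[of _ "Poly_Mapping.single (Poly_Mapping.single (u, k) 1) 1"])
    (auto simp: mpoly_eval_single monomial_value_def)

lemma rat_poly_fun_add:
  fixes f g :: "('v \<Rightarrow> real ^ 'd) \<Rightarrow> real"
  assumes "rat_poly_fun V f" "rat_poly_fun V g"
  shows "rat_poly_fun V (\<lambda>p. f p + g p)"
proof -
  obtain P Q :: "('v \<times> 'd) rat_mpoly" where
    P: "\<forall>m\<in>Poly_Mapping.keys P. Poly_Mapping.keys m \<subseteq> V \<times> UNIV" "\<forall>p. f p = mpoly_eval P (\<lambda>(u, k). p u $ k)" and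
    Q: "\<forall>m\<in>Poly_Mapping.keys Q. Poly_Mapping.keys m \<subseteq> V \<times> UNIV" "\<forall>p. g p = mpoly_eval Q (\<lambda>(u, k). p u $ k)"
    using assms unfolding rat_poly_fun_def by blast
  have "\<forall>m\<in>Poly_Mapping.keys (P + Q). Poly_Mapping.keys m \<subseteq> V \<times> UNIV"
    using keys_add[of P Q] P(1) Q(1) by blast
  with P(2) Q(2) show ?thesis
    unfolding rat_poly_fun_def by (intro exI[of _ "P + Q"]) (auto simp: mpoly_eval_add)
qed

lemma rat_poly_fun_mult:
  fixes f g :: "('v \<Rightarrow> real ^ 'd) \<Rightarrow> real"
  assumes "rat_poly_fun V f" "rat_poly_fun V g"
  shows "rat_poly_fun V (\<lambda>p. f p * g p)"
proof -
  obtain P Q :: "('v \<times> 'd) rat_mpoly" where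
    P: "\<forall>m\<in>Poly_Mapping.keys P. Poly_Mapping.keys m \<subseteq> V \<times> UNIV" "\<forall>p. f p = mpoly_eval P (\<lambda>(u, k). p u $ k)" and
    Q: "\<forall>m\<in>Poly_Mapping.keys Q. Poly_Mapping.keys m \<subseteq> V \<times> UNIV" "\<forall>p. g p = mpoly_eval Q (\<lambda>(u, k). p u $ k)"
    using assms unfolding rat_poly_fun_def by blast
  have "Poly_Mapping.keys m \<subseteq> V \<times> UNIV" if m: "m \<in> Poly_Mapping.keys (P * Q)" for m
  proof -
    obtain a b where "m = a + b" "a \<in> Poly_Mapping.keys P" "b \<in> Poly_Mapping.keys Q"
      using keys_mult[of P Q] m by blast
    then show ?thesis
      using keys_add[of a b] P(1) Q(1) by blast
  qed
  with P(2) Q(2) show ?thesis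
    unfolding rat_poly_fun_def by (intro exI[of _ "P * Q"]) (auto simp: mpoly_eval_mult)
qed

lemma rat_poly_fun_sum:
  "finite I \<Longrightarrow> (\<And>i. i \<in> I \<Longrightarrow> rat_poly_fun V (f i)) \<Longrightarrow> rat_poly_fun V (\<lambda>p. \<Sum>i\<in>I. f i p)"
  by (induct I rule: finite_induct) (auto intro: rat_poly_fun_add rat_poly_fun_const[where c = 0, simplified])

lemma rat_poly_fun_prod:
  "finite I \<Longrightarrow> (\<And>i. i \<in> I \<Longrightarrow> rat_poly_fun V (f i)) \<Longrightarrow> rat_poly_fun V (\<lambda>p. \<Prod>i\<in>I. f i p)"
  by (induct I rule: finite_induct) (auto intro: rat_poly_fun_mult rat_poly_fun_const[where c = 1, simplified])

lemma rat_poly_fun_of_int: "rat_poly_fun V (\<lambda>p. of_int c)"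
  using rat_poly_fun_const[of V "of_int c"] by simp

lemma rat_poly_fun_uminus: "rat_poly_fun V f \<Longrightarrow> rat_poly_fun V (\<lambda>p. - f p)"
  using rat_poly_fun_mult[OF rat_poly_fun_of_int[of V "-1"]] by simp

lemma rat_poly_fun_if: "rat_poly_fun V f \<Longrightarrow> rat_poly_fun V g \<Longrightarrow> rat_poly_fun V (\<lambda>p. if c then f p else g p)"
  by (cases c) simp_all

lemma rat_poly_fun_det:
  assumes "\<And>i j. i < N \<Longrightarrow> j < N \<Longrightarrow> rat_poly_fun V (\<lambda>p. f p i j)"
  shows "rat_poly_fun V (\<lambda>p. Determinant.det (mat N N (\<lambda>(i, j). f p i j)))"
proof -
  have "rat_poly_fun V (\<lambda>p. \<Sum>\<pi>\<in>{\<pi>. \<pi> permutes {0..<N}}. of_int (signof \<pi>) * (\<Prod>i = 0..<N. f p i (\<pi> i)))"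
    using assms permutes_in_image
    by (intro rat_poly_fun_sum rat_poly_fun_mult rat_poly_fun_of_int rat_poly_fun_prod)
      (auto simp: finite_permutations)
  then show ?thesis
    by (simp add: Determinant.det_def)
qed

lemma rat_poly_fun_generic_nonzero:
  fixes f :: "('v \<Rightarrow> real ^ 'd) \<Rightarrow> real"
  assumes "rat_poly_fun V f" "f p0 \<noteq> 0" "generic_config V p"
  shows "f p \<noteq> 0"
proof -
  obtain P :: "('v \<times> 'd) rat_mpoly" where
    P: "\<forall>m\<in>Poly_Mapping.keys P. Poly_Mapping.keys m \<subseteq> V \<times> UNIV" "\<forall>p. f p = mpoly_eval P (\<lambda>(u, k). p u $ k)"
    using assms(1) unfolding rat_poly_fun_def by blast
  have "P \<noteq> 0" using assms(2) P(2) by (auto simp: mpoly_eval_def)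
  then show ?thesis using assms(3) P unfolding generic_config_def by auto
qed

section \<open>Linear systems with polynomial coefficients\<close>

definition trivial_kernel :: "'x set \<Rightarrow> 'y set \<Rightarrow> ('y \<Rightarrow> 'x \<Rightarrow> real) \<Rightarrow> bool" where
  "trivial_kernel X Y c \<longleftrightarrow> (\<forall>z. (\<forall>y\<in>Y. (\<Sum>x\<in>X. c y x * z x) = 0) \<longrightarrow> (\<forall>x\<in>X. z x = 0))"

lemma gram_mult_vec_eq_0_iff:
  fixes c :: "'y \<Rightarrow> nat \<Rightarrow> real"
  assumes "finite Y" and v: "v \<in> carrier_vec N"
  shows "mat N N (\<lambda>(i, j). \<Sum>y\<in>Y. c y i * c y j) *\<^sub>v v = 0\<^sub>v N \<longleftrightarrow>
    (\<forall>y\<in>Y. (\<Sum>i<N. c y i * vec_index v i) = 0)"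
    (is "?G *\<^sub>v v = _ \<longleftrightarrow> _")
proof -
  have Gv: "vec_index (?G *\<^sub>v v) i = (\<Sum>y\<in>Y. c y i * (\<Sum>j<N. c y j * vec_index v j))" if "i < N" for i
    using that v by (simp add: scalar_prod_def atLeast0LessThan sum_distrib_left sum_distrib_right mult_ac)
      (rule sum.swap)
  show ?thesis
  proof
    assume "?G *\<^sub>v v = 0\<^sub>v N"
    then have "0 = (\<Sum>i<N. vec_index v i * vec_index (?G *\<^sub>v v) i)"
      by simp
    also have "\<dots> = (\<Sum>i<N. vec_index v i * (\<Sum>y\<in>Y. c y i * (\<Sum>j<N. c y j * vec_index v j)))"
      by (intro sum.cong refl) (simp only: Gv lessThan_iff)
    also have "\<dots> = (\<Sum>y\<in>Y. (\<Sum>i<N. c y i * vec_index v i)\<^sup>2)"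
      by (simp add: power2_eq_square sum_distrib_left sum_distrib_right mult_ac sum.swap[of _ Y])
    finally show "\<forall>y\<in>Y. (\<Sum>i<N. c y i * vec_index v i) = 0"
      using assms(1) by (simp add: sum_nonneg_eq_0_iff)
  next
    assume sol: "\<forall>y\<in>Y. (\<Sum>i<N. c y i * vec_index v i) = 0"
    show "?G *\<^sub>v v = 0\<^sub>v N"
    proof (rule eq_vecI)
      fix i assume "i < dim_vec (0\<^sub>v N :: real vec)"
      then show "vec_index (?G *\<^sub>v v) i = vec_index (0\<^sub>v N) i"
        using Gv[of i] sol by simp
    qed simp
  qed
qed

lemma trivial_kernel_iff_det_gram:
  fixes c :: "'y \<Rightarrow> 'x \<Rightarrow> real"
  assumes "finite Y" and e: "bij_betw e {0..<N} X"
  shows "trivial_kernel X Y c \<longleftrightarrow>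
    Determinant.det (mat N N (\<lambda>(i, j). \<Sum>y\<in>Y. c y (e i) * c y (e j))) \<noteq> 0"
proof -
  have sum_X: "(\<Sum>x\<in>X. f x) = (\<Sum>i<N. f (e i))" for f :: "'x \<Rightarrow> real"
    using sum.reindex_bij_betw[OF e, symmetric] by (simp add: atLeast0LessThan)
  have "trivial_kernel X Y c \<longleftrightarrow>
      (\<forall>v\<in>carrier_vec N. (\<forall>y\<in>Y. (\<Sum>i<N. c y (e i) * vec_index v i) = 0) \<longrightarrow> v = 0\<^sub>v N)"
  proof
    assume triv: "trivial_kernel X Y c"
    show "\<forall>v\<in>carrier_vec N. (\<forall>y\<in>Y. (\<Sum>i<N. c y (e i) * vec_index v i) = 0) \<longrightarrow> v = 0\<^sub>v N"
    proof (intro ballI impI)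
      fix v :: "real vec" assume v: "v \<in> carrier_vec N" and sol: "\<forall>y\<in>Y. (\<Sum>i<N. c y (e i) * vec_index v i) = 0"
      define z where "z x = vec_index v (the_inv_into {0..<N} e x)" for x
      have z_e: "z (e i) = vec_index v i" if "i < N" for i
        using that e by (simp add: z_def bij_betw_def the_inv_into_f_f)
      have "\<forall>x\<in>X. z x = 0"
        using triv sol unfolding trivial_kernel_def by (simp add: sum_X z_e)
      then show "v = 0\<^sub>v N"
        using v e z_e by (intro eq_vecI) (auto simp: bij_betw_def)
    qed
  next
    assume triv: "\<forall>v\<in>carrier_vec N. (\<forall>y\<in>Y. (\<Sum>i<N. c y (e i) * vec_index v i) = 0) \<longrightarrow> v = 0\<^sub>v N"
    show "trivial_kernel X Y c"
      unfolding trivial_kernel_def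
    proof (intro allI impI ballI)
      fix z x assume "\<forall>y\<in>Y. (\<Sum>x\<in>X. c y x * z x) = 0" and x: "x \<in> X"
      then have "vec N (\<lambda>i. z (e i)) = 0\<^sub>v N"
        using triv by (simp add: sum_X)
      moreover obtain i where "i < N" "x = e i"
        using e x by (auto simp: bij_betw_def)
      ultimately show "z x = 0"
        by (metis index_vec index_zero_vec(1))
    qed
  qed
  also have "\<dots> \<longleftrightarrow> Determinant.det (mat N N (\<lambda>(i, j). \<Sum>y\<in>Y. c y (e i) * c y (e j))) \<noteq> 0"
    by (subst det_0_iff_vec_prod_zero[where n = N]) (auto simp: gram_mult_vec_eq_0_iff[OF assms(1)])
  finally show ?thesis .
qed

lemma trivial_kernel_generic:
  fixes c :: "('v \<Rightarrow> real ^ 'd) \<Rightarrow> 'y \<Rightarrow> 'x \<Rightarrow> real"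
  assumes "finite X" "finite Y"
    and poly: "\<And>y x. y \<in> Y \<Longrightarrow> x \<in> X \<Longrightarrow> rat_poly_fun V (\<lambda>p. c p y x)"
    and "trivial_kernel X Y (c p0)" and "generic_config V p"
  shows "trivial_kernel X Y (c p)"
proof -
  obtain e where e: "bij_betw e {0..<card X} X"
    using ex_bij_betw_nat_finite[OF assms(1)] by blast
  then have poly_det: "rat_poly_fun V (\<lambda>p. Determinant.det
      (mat (card X) (card X) (\<lambda>(i, j). \<Sum>y\<in>Y. c p y (e i) * c p y (e j))))"
    by (intro rat_poly_fun_det rat_poly_fun_sum rat_poly_fun_mult assms(2))
      (auto intro!: poly bij_betw_apply[OF e])
  show ?thesis
    using rat_poly_fun_generic_nonzero[OF poly_det _ assms(5)] assms(4)
    unfolding trivial_kernel_iff_det_gram[OF assms(2) e] by blast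
qed

section \<open>Affine independence\<close>

(* A property of the indexed family: a repeated point makes it dependent. *)
definition affinely_independent :: "('v \<Rightarrow> 'a::real_vector) \<Rightarrow> 'v set \<Rightarrow> bool" where
  "affinely_independent p U \<longleftrightarrow>
     (\<forall>c. (\<Sum>u\<in>U. c u *\<^sub>R p u) = 0 \<and> (\<Sum>u\<in>U. c u) = 0 \<longrightarrow> (\<forall>u\<in>U. c u = 0))"

lemma affinely_independent_iff_trivial_kernel:
  fixes p :: "'v \<Rightarrow> real ^ 'd"
  shows "affinely_independent p U \<longleftrightarrow>
    trivial_kernel U UNIV (\<lambda>y u. case y of None \<Rightarrow> 1 | Some k \<Rightarrow> p u $ k)"
proof -
  have "(\<forall>y. (\<Sum>u\<in>U. (case y of None \<Rightarrow> 1 | Some k \<Rightarrow> p u $ k) * c u) = 0) \<longleftrightarrow>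
      (\<Sum>u\<in>U. c u) = 0 \<and> (\<forall>k. (\<Sum>u\<in>U. p u $ k * c u) = 0)" for c
    by (metis (no_types, lifting) mult_1 option.exhaust option.simps(4,5) sum.cong)
  moreover have "(\<forall>k. (\<Sum>u\<in>U. p u $ k * c u) = 0) \<longleftrightarrow> (\<Sum>u\<in>U. c u *\<^sub>R p u) = 0" for c
    by (simp add: Finite_Cartesian_Product.vec_eq_iff sum_component mult.commute)
  ultimately show ?thesis
    unfolding affinely_independent_def trivial_kernel_def by auto
qed

lemma affinely_independent_inj_on:
  assumes "affinely_independent p U" "finite U"
  shows "inj_on p U"
proof (rule inj_onI, rule ccontr)
  fix u v assume uv: "u \<in> U" "v \<in> U" "p u = p v" "u \<noteq> v"
  define c where "c w = (if w = u then 1 else 0) - (if w = v then 1 else (0::real))" for w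
  have "(\<Sum>w\<in>U. c w *\<^sub>R p w) = 0" "(\<Sum>w\<in>U. c w) = 0"
    using uv assms(2) by (simp_all add: c_def scaleR_left_diff_distrib sum_subtractf
        if_distrib[of "\<lambda>t. t *\<^sub>R _"] cong: if_cong)
  then have "c u = 0"
    using assms(1) uv unfolding affinely_independent_def by blast
  with uv show False
    by (simp add: c_def)
qed

lemma affinely_independent_imp_independent_diffs:
  fixes p :: "'v \<Rightarrow> 'a::euclidean_space"
  assumes "affinely_independent p U" "finite U" "u0 \<in> U"
  shows "inj_on (\<lambda>u. p u - p u0) (U - {u0})" "independent ((\<lambda>u. p u - p u0) ` (U - {u0}))"
proof -
  let ?D = "\<lambda>u. p u - p u0"
  show inj: "inj_on ?D (U - {u0})"
    using affinely_independent_inj_on[OF assms(1,2)] by (auto simp: inj_on_def)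
  show "independent (?D ` (U - {u0}))"
    unfolding eucl.independent_explicit
  proof (intro conjI allI impI ballI)
    show "finite (?D ` (U - {u0}))"
      using assms(2) by simp
    fix a w assume a: "(\<Sum>v\<in>?D ` (U - {u0}). a v *\<^sub>R v) = 0" and w: "w \<in> ?D ` (U - {u0})"
    define c where "c u = (if u = u0 then - (\<Sum>v\<in>U - {u0}. a (?D v)) else a (?D u))" for u
    have U: "U = insert u0 (U - {u0})" and fin: "finite (U - {u0})"
      using assms(2,3) by auto
    have "(\<Sum>u\<in>U. c u *\<^sub>R p u) = (\<Sum>u\<in>U - {u0}. a (?D u) *\<^sub>R ?D u)"
      by (subst U, subst sum.insert[OF fin])
        (simp_all add: c_def scaleR_diff_right sum_subtractf scaleR_sum_left)
    also have "\<dots> = 0"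
      using a by (simp add: sum.reindex[OF inj])
    finally have "(\<Sum>u\<in>U. c u *\<^sub>R p u) = 0" .
    moreover have "(\<Sum>u\<in>U. c u) = 0"
      by (subst U, subst sum.insert[OF fin]) (auto simp: c_def)
    ultimately have "\<forall>u\<in>U. c u = 0"
      using assms(1) unfolding affinely_independent_def by blast
    moreover obtain u where "u \<in> U - {u0}" "w = ?D u"
      using w by blast
    ultimately show "a w = 0"
      by (auto simp: c_def)
  qed
qed

definition affine_function_of :: "('v \<Rightarrow> real ^ 'd) \<Rightarrow> 'v set \<Rightarrow> ('v \<Rightarrow> real ^ 'd) \<Rightarrow> bool" where
  "affine_function_of p U r \<longleftrightarrow> (\<exists>A b. \<forall>u\<in>U. r u = A *v p u + b)"

lemma affinely_independent_affine_function_of: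
  fixes p r :: "'v \<Rightarrow> real ^ 'd"
  assumes "affinely_independent p U" "finite U"
  shows "affine_function_of p U r"
proof (cases "U = {}")
  case True
  then show ?thesis by (simp add: affine_function_of_def)
next
  case False
  then obtain u0 where u0: "u0 \<in> U" by blast
  let ?D = "\<lambda>u. p u - p u0"
  note indep = affinely_independent_imp_independent_diffs[OF assms u0]
  obtain g where g: "linear g" "\<forall>x\<in>?D ` (U - {u0}). g x = r (inv_into (U - {u0}) ?D x) - r u0"
    using real_vector.linear_independent_extend[OF indep(2),
        of "\<lambda>x. r (inv_into (U - {u0}) ?D x) - r u0"] by blast
  have "r u = matrix g *v p u + (r u0 - matrix g *v p u0)" if "u \<in> U" for u
  proof (cases "u = u0")
    case False
    with that have "u \<in> U - {u0}"
      by simp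
    with g inv_into_f_f[OF indep(1)] have "matrix g *v ?D u = r u - r u0"
      by (simp add: matrix_works)
    then show ?thesis
      by (simp add: matrix_vector_mult_diff_distrib algebra_simps)
  qed simp
  then show ?thesis
    unfolding affine_function_of_def by blast
qed

lemma invertible_if_inj: "inj ((*v) (A :: real ^ 'n ^ 'n)) \<Longrightarrow> invertible A"
  unfolding invertible_def using matrix_left_invertible_injective matrix_left_right_inverse by metis

lemma affinely_independent_invertible_affine:
  fixes p p' :: "'v \<Rightarrow> real ^ 'd"
  assumes "affinely_independent p U" "affinely_independent p' U" "finite U"
  shows "\<exists>g. invertible_affine g \<and> (\<forall>u\<in>U. g (p u) = p' u)"
proof (cases "U = {}")
  case True
  have "invertible (Finite_Cartesian_Product.mat 1 :: real ^ 'd ^ 'd)"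
    by (rule invertible_if_inj) (simp add: inj_on_def)
  with True show ?thesis
    unfolding invertible_affine_def by blast
next
  case False
  then obtain u0 where u0: "u0 \<in> U" by blast
  let ?W = "U - {u0}"
  let ?D = "\<lambda>u. p u - p u0"
  let ?D' = "\<lambda>u. p' u - p' u0"
  note indep = affinely_independent_imp_independent_diffs[OF assms(1,3) u0]
  note indep' = affinely_independent_imp_independent_diffs[OF assms(2,3) u0]
  define f where "f x = ?D' (inv_into ?W ?D x)" for x
  have f_D: "f (?D u) = ?D' u" if "u \<in> ?W" for u
    using inv_into_f_f[OF indep(1) that] by (simp add: f_def)
  have "inj_on f (?D ` ?W)"
    using indep'(1) by (auto simp: inj_on_def f_D)
  moreover have "f ` (?D ` ?W) = ?D' ` ?W"
    using f_D by (auto simp: image_iff)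
  ultimately obtain g where g: "linear g" "inj g" "\<forall>x\<in>?D ` ?W. g x = f x"
    using eucl.linear_independent_extend_inj[OF indep(2)] indep'(2) by metis
  have "invertible (matrix g)"
    using g(1,2) by (intro invertible_if_inj) (simp add: matrix_works)
  moreover have "matrix g *v p u + (p' u0 - matrix g *v p u0) = p' u" if "u \<in> U" for u
  proof (cases "u = u0")
    case False
    with that g f_D have "matrix g *v ?D u = ?D' u"
      by (simp add: matrix_works)
    then show ?thesis
      by (simp add: matrix_vector_mult_diff_distrib algebra_simps)
  qed simp
  ultimately show ?thesis
    unfolding invertible_affine_def by blast
qed

lemma affinely_independent_affine_eq_0:
  fixes p :: "'v \<Rightarrow> real ^ 'd"
  assumes "affinely_independent p U" "finite U" "card U = CARD('d) + 1"
    and zero: "\<forall>u\<in>U. A *v p u + b = 0"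
  shows "A = 0 \<and> b = 0"
proof -
  obtain u0 where u0: "u0 \<in> U"
    using assms(3) by fastforce
  let ?D = "\<lambda>u. p u - p u0"
  note indep = affinely_independent_imp_independent_diffs[OF assms(1,2) u0]
  have "card (?D ` (U - {u0})) = dim (UNIV :: (real ^ 'd) set)"
    using card_image[OF indep(1)] assms(2,3) u0 by (simp add: eucl.dim_UNIV)
  then have span: "span (?D ` (U - {u0})) = UNIV"
    using eucl.card_eq_dim[of "?D ` (U - {u0})" UNIV] indep(2) assms(2) by auto
  have "A *v ?D u = 0" if "u \<in> U" for u
  proof -
    have "A *v ?D u = (A *v p u + b) - (A *v p u0 + b)"
      by (simp add: matrix_vector_mult_diff_distrib)
    with zero that u0 show ?thesis
      by simp
  qed
  then have "A *v x = 0" for x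
    using real_vector.linear_eq_0_on_span[OF matrix_vector_mul_linear, of "?D ` (U - {u0})" A x]
      span by blast
  then have "A = 0"
    by (simp add: matrix_eq)
  with zero u0 show ?thesis
    by auto
qed

lemma affinely_independent_simplex_vertices:
  fixes \<iota> :: "'v \<Rightarrow> 'd::finite"
  assumes "finite U" "u0 \<in> U" "inj_on \<iota> (U - {u0})"
  shows "affinely_independent (\<lambda>u. if u = u0 then 0 else axis (\<iota> u) 1 :: real ^ 'd) U"
    (is "affinely_independent ?p U")
  unfolding affinely_independent_def
proof (intro allI impI ballI)
  fix c u assume c: "(\<Sum>u\<in>U. c u *\<^sub>R ?p u) = 0 \<and> (\<Sum>u\<in>U. c u) = 0" and "u \<in> U"
  have c_W: "c w = 0" if "w \<in> U - {u0}" for w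
  proof -
    have "(\<Sum>u\<in>U. c u *\<^sub>R ?p u) $ \<iota> w = (\<Sum>u\<in>U. if u = w then c u else 0)"
      using assms(3) that by (auto simp: sum_component axis_def inj_on_def intro!: sum.cong)
    with c that assms(1) show ?thesis
      by simp
  qed
  then have "(\<Sum>u\<in>U. c u) = c u0"
    using assms(1,2) by (simp add: sum.remove)
  with c c_W \<open>u \<in> U\<close> show "c u = 0"
    by (cases "u = u0") auto
qed

lemma generic_config_affinely_independent:
  fixes p :: "'v \<Rightarrow> real ^ 'd"
  assumes "generic_config V p" "finite V" "U \<subseteq> V" "card U \<le> CARD('d) + 1"
  shows "affinely_independent p U"
proof (cases "U = {}")
  case True
  then show ?thesis by (simp add: affinely_independent_def)
next
  case False
  then obtain u0 where u0: "u0 \<in> U" by blast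
  have fin: "finite U"
    using assms(2,3) finite_subset by blast
  then have "card (U - {u0}) \<le> card (UNIV :: 'd set)"
    using assms(4) u0 by simp
  then obtain \<iota> :: "'v \<Rightarrow> 'd" where "inj_on \<iota> (U - {u0})"
    using card_le_inj[of "U - {u0}" "UNIV :: 'd set"] fin by auto
  with fin u0 have "affinely_independent (\<lambda>u. if u = u0 then 0 else axis (\<iota> u) 1 :: real ^ 'd) U"
    by (rule affinely_independent_simplex_vertices)
  moreover have "rat_poly_fun V (\<lambda>p. case y of None \<Rightarrow> 1 | Some k \<Rightarrow> p u $ k)"
    if "u \<in> U" for y :: "'d option" and u
    using that assms(3) rat_poly_fun_const[of V 1] rat_poly_fun_coord[of u V]
    by (cases y) auto
  ultimately show ?thesis
    unfolding affinely_independent_iff_trivial_kernel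
    by (intro trivial_kernel_generic[OF fin _ _ _ assms(1),
          of UNIV "\<lambda>p y u. case y of None \<Rightarrow> 1 | Some k \<Rightarrow> p u $ k"]) auto
qed

section \<open>Flexes and affine rigidity\<close>

lemma invertible_affine_comp:
  assumes "invertible_affine f" "invertible_affine g"
  shows "invertible_affine (\<lambda>x. f (g x))"
proof -
  obtain A b B c where "invertible A" "f = (\<lambda>x. A *v x + b)" "invertible B" "g = (\<lambda>x. B *v x + c)"
    using assms unfolding invertible_affine_def by blast
  then show ?thesis
    unfolding invertible_affine_def
    by (intro exI[of _ "A ** B"] exI[of _ "A *v c + b"])
      (simp add: invertible_mult matrix_vector_right_distrib matrix_vector_mul_assoc add.assoc)
qed

lemma invertible_affine_inverse:
  assumes "invertible_affine f"
  obtains g where "invertible_affine g" "\<And>x. g (f x) = x"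
proof -
  obtain A b where A: "invertible A" and f: "f = (\<lambda>x. A *v x + b)"
    using assms unfolding invertible_affine_def by blast
  obtain A' where A': "A ** A' = Finite_Cartesian_Product.mat 1" "A' ** A = Finite_Cartesian_Product.mat 1"
    using A unfolding invertible_def by blast
  then have "invertible A'"
    unfolding invertible_def by blast
  moreover have "A' *v f x + - (A' *v b) = x" for x
    by (simp add: f A' matrix_vector_right_distrib matrix_vector_mul_assoc)
  ultimately show ?thesis
    using that unfolding invertible_affine_def by blast
qed

lemma affinely_rigid_invertible_affine_image:
  assumes "invertible_affine \<phi>" "\<forall>u\<in>V. \<phi> (p u) = p' u" "\<forall>h\<in>E. h \<subseteq> V"
    and "affinely_rigid V E p"
  shows "affinely_rigid V E p'"
  unfolding affinely_rigid_def
proof (intro allI impI)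
  fix q assume equiv': "affinely_equivalent E p' q"
  have "affinely_equivalent E p q"
    unfolding affinely_equivalent_def
  proof
    fix h assume h: "h \<in> E"
    then obtain g where "invertible_affine g" "\<forall>u\<in>h. g (p' u) = q u"
      using equiv' unfolding affinely_equivalent_def by blast
    moreover have "h \<subseteq> V"
      using assms(3) h by blast
    ultimately show "\<exists>g. invertible_affine g \<and> (\<forall>u\<in>h. g (p u) = q u)"
      using assms(1,2) by (intro exI[of _ "\<lambda>x. g (\<phi> x)"]) (auto intro: invertible_affine_comp)
  qed
  then obtain G where G: "invertible_affine G" "\<forall>u\<in>V. G (p u) = q u"
    using assms(4) unfolding affinely_rigid_def affinely_congruent_def by blast
  obtain \<psi> where "invertible_affine \<psi>" "\<And>x. \<psi> (\<phi> x) = x"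
    using invertible_affine_inverse[OF assms(1)] by blast
  with G show "affinely_congruent V p' q"
    unfolding affinely_congruent_def
    by (intro exI[of _ "\<lambda>x. G (\<psi> x)"])
      (auto intro: invertible_affine_comp simp: assms(2)[rule_format, symmetric])
qed

lemma invertible_mat_1_plus_small:
  fixes A :: "'i \<Rightarrow> real ^ 'n ^ 'n"
  assumes "finite E"
  obtains \<epsilon> where "\<epsilon> > 0" "\<And>h. h \<in> E \<Longrightarrow> invertible (Finite_Cartesian_Product.mat 1 + \<epsilon> *\<^sub>R A h)"
proof -
  have "\<forall>h\<in>E. \<exists>K>0. \<forall>x. norm (A h *v x) \<le> norm x * K"
    using bounded_linear.pos_bounded[OF matrix_vector_mul_bounded_linear] by blast
  then obtain K where K: "\<And>h. h \<in> E \<Longrightarrow> K h > 0 \<and> (\<forall>x. norm (A h *v x) \<le> norm x * K h)"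
    by metis
  define M where "M = (\<Sum>h\<in>E. K h)"
  define \<epsilon> where "\<epsilon> = 1 / (1 + M)"
  have M: "0 \<le> M"
    unfolding M_def using K by (intro sum_nonneg) (auto intro: less_imp_le)
  have K_le_M: "K h \<le> M" if "h \<in> E" for h
    unfolding M_def using K assms that by (intro member_le_sum) (auto intro: less_imp_le)
  have \<epsilon>_pos: "\<epsilon> > 0"
    using M by (simp add: \<epsilon>_def)
  have \<epsilon>: "\<epsilon> * K h < 1" if "h \<in> E" for h
    using K_le_M[OF that] M by (simp add: \<epsilon>_def field_simps)
  have "invertible (Finite_Cartesian_Product.mat 1 + \<epsilon> *\<^sub>R A h)" if h: "h \<in> E" for h
  proof (rule invertible_if_inj, unfold vec.inj_iff_eq_0, intro allI impI)
    fix x assume "(Finite_Cartesian_Product.mat 1 + \<epsilon> *\<^sub>R A h) *v x = 0"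
    then have "x = - (\<epsilon> *\<^sub>R (A h *v x))"
      by (simp add: matrix_vector_mult_add_rdistrib scaleR_matrix_vector_assoc[symmetric]
          eq_neg_iff_add_eq_0)
    then have "norm x = \<epsilon> * norm (A h *v x)"
      using \<epsilon>_pos by (metis norm_minus_cancel norm_scaleR abs_of_pos)
    also have "\<dots> \<le> (\<epsilon> * K h) * norm x"
      using K[OF h] \<epsilon>_pos by (simp add: mult_left_mono mult_ac)
    finally show "x = 0"
      using \<epsilon>[OF h] by (metis mult_le_cancel_right1 norm_ge_zero norm_le_zero_iff not_le)
  qed
  then show ?thesis
    by (rule that[OF \<epsilon>_pos])
qed

lemma not_affinely_rigid_if_nonaffine_flex:
  fixes p r :: "'v \<Rightarrow> real ^ 'd"
  assumes "finite E"
    and flex: "\<forall>h\<in>E. affine_function_of p h r"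
    and nonaffine: "\<not> affine_function_of p V r"
  shows "\<not> affinely_rigid V E p"
proof
  assume rigid: "affinely_rigid V E p"
  obtain A b where A: "\<And>h u. h \<in> E \<Longrightarrow> u \<in> h \<Longrightarrow> r u = A h *v p u + b h"
    using flex unfolding affine_function_of_def by metis
  obtain \<epsilon> where \<epsilon>: "\<epsilon> > 0" "\<And>h. h \<in> E \<Longrightarrow> invertible (Finite_Cartesian_Product.mat 1 + \<epsilon> *\<^sub>R A h)"
    using invertible_mat_1_plus_small[OF assms(1)] by blast
  define q where "q u = p u + \<epsilon> *\<^sub>R r u" for u
  have "affinely_equivalent E p q"
    unfolding affinely_equivalent_def
  proof
    fix h assume h: "h \<in> E"
    have "invertible_affine (\<lambda>x. (Finite_Cartesian_Product.mat 1 + \<epsilon> *\<^sub>R A h) *v x + \<epsilon> *\<^sub>R b h)"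
      unfolding invertible_affine_def using \<epsilon>(2)[OF h] by blast
    moreover have "\<forall>u\<in>h. (Finite_Cartesian_Product.mat 1 + \<epsilon> *\<^sub>R A h) *v p u + \<epsilon> *\<^sub>R b h = q u"
      using A h by (simp add: q_def matrix_vector_mult_add_rdistrib scaleR_matrix_vector_assoc[symmetric]
          scaleR_add_right add.assoc)
    ultimately show "\<exists>g. invertible_affine g \<and> (\<forall>u\<in>h. g (p u) = q u)"
      by blast
  qed
  then obtain G c where G: "\<forall>u\<in>V. G *v p u + c = q u"
    using rigid unfolding affinely_rigid_def affinely_congruent_def invertible_affine_def by blast
  have "r u = ((1 / \<epsilon>) *\<^sub>R (G - Finite_Cartesian_Product.mat 1)) *v p u + (1 / \<epsilon>) *\<^sub>R c"
    if "u \<in> V" for u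
  proof -
    have "r u = (1 / \<epsilon>) *\<^sub>R (\<epsilon> *\<^sub>R r u)"
      using \<epsilon>(1) by simp
    also have "\<epsilon> *\<^sub>R r u = (G - Finite_Cartesian_Product.mat 1) *v p u + c"
      using G that by (simp add: q_def matrix_vector_mult_diff_rdistrib algebra_simps)
    finally show ?thesis
      by (simp add: scaleR_matrix_vector_assoc scaleR_add_right)
  qed
  with nonaffine show False
    unfolding affine_function_of_def by blast
qed

section \<open>The pinned flex system\<close>

lemma sum_if_const: "(\<Sum>x\<in>A. if c then f x else 0) = (if c then sum f A else 0)"
  by simp

lemma sum_if_conj_delta:
  "finite A \<Longrightarrow> (\<Sum>x\<in>A. if c \<and> x = a then f x else 0) = (if c \<and> a \<in> A then f a else 0)"
  by (cases c) simp_all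

(* Unknowns and equations of the linear system whose solutions are the triples (r, A, b) with
   r u = A h *v p u + b h for u \<in> h \<in> F and r u = 0 for u \<in> B: the displacement r is a flex
   pinned on B, and (A h, b h) is the affine map realising it on the hyperedge h. *)
datatype ('v, 'd) flex_var = Disp 'v 'd | Lin "'v set" 'd 'd | Transl "'v set" 'd
datatype ('v, 'd) flex_eqn = Edge_eqn "'v set" 'v 'd | Pin_eqn 'v 'd

definition flex_vars :: "'v set \<Rightarrow> 'v set set \<Rightarrow> ('v, 'd) flex_var set" where
  "flex_vars V F = {Disp u k | u k. u \<in> V} \<union> {Lin h k j | h k j. h \<in> F} \<union> {Transl h k | h k. h \<in> F}"

definition flex_eqns :: "'v set set \<Rightarrow> 'v set \<Rightarrow> ('v, 'd) flex_eqn set" where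
  "flex_eqns F B = {Edge_eqn h u k | h u k. h \<in> F \<and> u \<in> h} \<union> {Pin_eqn u k | u k. u \<in> B}"

definition flex_coeff :: "('v \<Rightarrow> real ^ 'd) \<Rightarrow> ('v, 'd) flex_eqn \<Rightarrow> ('v, 'd) flex_var \<Rightarrow> real" where
  "flex_coeff p y x = (case y of
      Edge_eqn h u k \<Rightarrow> (case x of
          Disp u' k' \<Rightarrow> if u' = u \<and> k' = k then 1 else 0
        | Lin h' k' j \<Rightarrow> if h' = h \<and> k' = k then - p u $ j else 0
        | Transl h' k' \<Rightarrow> if h' = h \<and> k' = k then - 1 else 0)
    | Pin_eqn u k \<Rightarrow> (case x of Disp u' k' \<Rightarrow> if u' = u \<and> k' = k then 1 else 0 | _ \<Rightarrow> 0))"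

definition flex_value ::
  "('v \<Rightarrow> real ^ 'd) \<Rightarrow> ('v set \<Rightarrow> real ^ 'd ^ 'd) \<Rightarrow> ('v set \<Rightarrow> real ^ 'd) \<Rightarrow> ('v, 'd) flex_var \<Rightarrow> real" where
  "flex_value r A b x = (case x of Disp u k \<Rightarrow> r u $ k | Lin h k j \<Rightarrow> A h $ k $ j | Transl h k \<Rightarrow> b h $ k)"

lemma flex_value_surj:
  "z = flex_value (\<lambda>u. \<chi> k. z (Disp u k)) (\<lambda>h. \<chi> k j. z (Lin h k j)) (\<lambda>h. \<chi> k. z (Transl h k))"
  by (rule ext, simp add: flex_value_def split: flex_var.split)

lemma flex_vars_eq_images:
  "flex_vars V F = (\<lambda>(u, k). Disp u k) ` (V \<times> UNIV) \<union> (\<lambda>(h, k, j). Lin h k j) ` (F \<times> UNIV \<times> UNIV)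
    \<union> (\<lambda>(h, k). Transl h k) ` (F \<times> UNIV)"
  by (auto simp: flex_vars_def image_iff)

lemma finite_flex_vars: "finite V \<Longrightarrow> finite F \<Longrightarrow> finite (flex_vars V F :: ('v, 'd::finite) flex_var set)"
  by (simp add: flex_vars_eq_images)

lemma finite_flex_eqns:
  assumes "finite F" "\<forall>h\<in>F. finite h" "finite B"
  shows "finite (flex_eqns F B :: ('v, 'd::finite) flex_eqn set)"
proof -
  have "flex_eqns F B \<subseteq> (\<lambda>((h, u), k). Edge_eqn h u k) ` (Sigma F (\<lambda>h. h) \<times> UNIV)
      \<union> (\<lambda>(u, k). Pin_eqn u k) ` (B \<times> UNIV)"
    by (auto simp: flex_eqns_def image_iff)
  moreover have "finite ((\<lambda>((h, u), k). Edge_eqn h u k) ` (Sigma F (\<lambda>h. h) \<times> (UNIV :: 'd set))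
      \<union> (\<lambda>(u, k). Pin_eqn u k) ` (B \<times> (UNIV :: 'd set)))"
    using assms by (auto intro!: finite_imageI finite_cartesian_product finite_SigmaI)
  ultimately show ?thesis
    by (rule finite_subset)
qed

lemma sum_flex_vars:
  fixes f :: "('v, 'd::finite) flex_var \<Rightarrow> 'a::comm_monoid_add"
  assumes "finite V" "finite F"
  shows "(\<Sum>x\<in>flex_vars V F. f x) = (\<Sum>u\<in>V. \<Sum>k\<in>UNIV. f (Disp u k))
    + (\<Sum>h\<in>F. \<Sum>k\<in>UNIV. \<Sum>j\<in>UNIV. f (Lin h k j)) + (\<Sum>h\<in>F. \<Sum>k\<in>UNIV. f (Transl h k))"
proof -
  have inj: "inj_on (\<lambda>(u, k). Disp u k) A" "inj_on (\<lambda>(h, k, j). Lin h k j) B"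
    "inj_on (\<lambda>(h, k). Transl h k) C" for A B C
    by (auto simp: inj_on_def)
  show ?thesis
    unfolding flex_vars_eq_images using assms
    by (subst sum.union_disjoint, auto)+
      (simp add: sum.reindex inj sum.cartesian_product prod.case_distrib)
qed

lemma ball_flex_vars:
  "(\<forall>x\<in>flex_vars V F. P x) \<longleftrightarrow>
    (\<forall>u\<in>V. \<forall>k. P (Disp u k)) \<and> (\<forall>h\<in>F. \<forall>k j. P (Lin h k j)) \<and> (\<forall>h\<in>F. \<forall>k. P (Transl h k))"
  unfolding flex_vars_def by blast

lemma ball_flex_eqns:
  "(\<forall>y\<in>flex_eqns F B. P y) \<longleftrightarrow> (\<forall>h\<in>F. \<forall>u\<in>h. \<forall>k. P (Edge_eqn h u k)) \<and> (\<forall>u\<in>B. \<forall>k. P (Pin_eqn u k))"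
  unfolding flex_eqns_def by blast

lemma flex_row_Edge_eqn:
  fixes p :: "'v \<Rightarrow> real ^ 'd"
  assumes "finite V" "finite F" "h \<in> F" "u \<in> h" "h \<subseteq> V"
  shows "(\<Sum>x\<in>flex_vars V F. flex_coeff p (Edge_eqn h u k) x * flex_value r A b x)
    = (r u - (A h *v p u + b h)) $ k"
  using assms subsetD[OF assms(5,4)]
  by (simp add: sum_flex_vars flex_coeff_def flex_value_def matrix_vector_mult_def mult.commute
      if_distrib[of "\<lambda>t. t * _"] if_distrib[of "\<lambda>t. _ * t"] sum_if_const sum_if_conj_delta
      sum_negf cong: if_cong)

lemma flex_row_Pin_eqn:
  fixes p :: "'v \<Rightarrow> real ^ 'd"
  assumes "finite V" "finite F" "u \<in> V"
  shows "(\<Sum>x\<in>flex_vars V F. flex_coeff p (Pin_eqn u k) x * flex_value r A b x) = r u $ k"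
  using assms
  by (simp add: sum_flex_vars flex_coeff_def flex_value_def
      if_distrib[of "\<lambda>t. t * _"] sum_if_conj_delta cong: if_cong)

definition pinned_flexes_trivial :: "'v set \<Rightarrow> 'v set set \<Rightarrow> 'v set \<Rightarrow> ('v \<Rightarrow> real ^ 'd) \<Rightarrow> bool" where
  "pinned_flexes_trivial V F B p \<longleftrightarrow>
     (\<forall>(r :: 'v \<Rightarrow> real ^ 'd) A b. (\<forall>h\<in>F. \<forall>u\<in>h. r u = A h *v p u + b h) \<and> (\<forall>u\<in>B. r u = 0) \<longrightarrow>
        (\<forall>u\<in>V. r u = 0) \<and> (\<forall>h\<in>F. A h = 0 \<and> b h = 0))"

lemma pinned_flexes_trivialD:
  fixes p r :: "'v \<Rightarrow> real ^ 'd"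
  assumes "pinned_flexes_trivial V F B p"
    and "\<And>h u. h \<in> F \<Longrightarrow> u \<in> h \<Longrightarrow> r u = A h *v p u + b h" "\<And>u. u \<in> B \<Longrightarrow> r u = 0"
  shows "\<forall>u\<in>V. r u = 0" "\<forall>h\<in>F. A h = 0 \<and> b h = 0"
  using assms(1)[unfolded pinned_flexes_trivial_def, rule_format, of r A b] assms(2,3) by blast+

lemma pinned_flexes_trivial_nonempty:
  fixes p :: "'v \<Rightarrow> real ^ 'd"
  assumes triv: "pinned_flexes_trivial V F B p" and "\<not> V \<subseteq> B"
  shows "F \<noteq> {}"
proof
  assume "F = {}"
  obtain w where w: "w \<in> V" "w \<notin> B"
    using assms(2) by blast
  \<comment> \<open>moving a single vertex outside B is then a nonzero pinned flex\<close>
  define r where "r u = (if u = w then 1 else 0 :: real ^ 'd)" for u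
  have "\<forall>u\<in>V. r u = 0"
    by (rule pinned_flexes_trivialD(1)[where A = "\<lambda>_. 0" and b = "\<lambda>_. 0", OF triv])
      (use \<open>F = {}\<close> w in \<open>auto simp: r_def\<close>)
  with w have "r w = 0"
    by blast
  then show False
    by (simp add: r_def Finite_Cartesian_Product.vec_eq_iff)
qed

lemma flex_system_iff:
  fixes p :: "'v \<Rightarrow> real ^ 'd"
  assumes "finite V" "finite F" "\<forall>h\<in>F. h \<subseteq> V" "B \<subseteq> V"
  shows "(\<forall>y\<in>flex_eqns F B. (\<Sum>x\<in>flex_vars V F. flex_coeff p y x * flex_value r A b x) = 0)
    \<longleftrightarrow> (\<forall>h\<in>F. \<forall>u\<in>h. r u = A h *v p u + b h) \<and> (\<forall>u\<in>B. r u = 0)"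
proof -
  have "(\<forall>y\<in>flex_eqns F B. (\<Sum>x\<in>flex_vars V F. flex_coeff p y x * flex_value r A b x) = 0)
      \<longleftrightarrow> (\<forall>h\<in>F. \<forall>u\<in>h. \<forall>k. (r u - (A h *v p u + b h)) $ k = 0) \<and> (\<forall>u\<in>B. \<forall>k. r u $ k = 0)"
    using assms by (simp add: ball_flex_eqns flex_row_Edge_eqn flex_row_Pin_eqn subsetD)
  then show ?thesis
    by (simp add: Finite_Cartesian_Product.vec_eq_iff)
qed

lemma flex_value_eq_0_iff:
  "(\<forall>x\<in>flex_vars V F. flex_value r A b x = 0) \<longleftrightarrow> (\<forall>u\<in>V. r u = 0) \<and> (\<forall>h\<in>F. A h = 0 \<and> b h = 0)"
  by (auto simp: ball_flex_vars flex_value_def Finite_Cartesian_Product.vec_eq_iff)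

lemma all_flex_value: "(\<forall>z. P z) \<longleftrightarrow> (\<forall>r A b. P (flex_value r A b))"
  by (metis flex_value_surj)

lemma pinned_flexes_trivial_iff_trivial_kernel:
  fixes p :: "'v \<Rightarrow> real ^ 'd"
  assumes "finite V" "finite F" "\<forall>h\<in>F. h \<subseteq> V" "B \<subseteq> V"
  shows "pinned_flexes_trivial V F B p \<longleftrightarrow> trivial_kernel (flex_vars V F) (flex_eqns F B) (flex_coeff p)"
  unfolding pinned_flexes_trivial_def trivial_kernel_def all_flex_value
  by (simp only: flex_system_iff[OF assms] flex_value_eq_0_iff)

lemma rat_poly_fun_flex_coeff:
  assumes "y \<in> flex_eqns F B" "\<forall>h\<in>F. h \<subseteq> V" "B \<subseteq> V"
  shows "rat_poly_fun V (\<lambda>p. flex_coeff p y x)"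
proof -
  have const: "rat_poly_fun V (\<lambda>p. of_int c)" for c
    by (rule rat_poly_fun_of_int)
  from assms show ?thesis
    by (cases x) (auto simp: flex_eqns_def flex_coeff_def subset_iff intro!: rat_poly_fun_if rat_poly_fun_uminus
        const[of 0, simplified] const[of 1, simplified] rat_poly_fun_coord)
qed

lemma pinned_flexes_trivial_generic:
  fixes p0 p :: "'v \<Rightarrow> real ^ 'd"
  assumes "finite V" "\<forall>h\<in>F. h \<subseteq> V" "B \<subseteq> V"
    and "pinned_flexes_trivial V F B p0" "generic_config V p"
  shows "pinned_flexes_trivial V F B p"
proof -
  have fin: "finite F" "\<forall>h\<in>F. finite h" "finite B"
    using assms(1-3) by (auto intro: finite_subset[of F "Pow V"] finite_subset)
  show ?thesis
    using assms(4)
    unfolding pinned_flexes_trivial_iff_trivial_kernel[OF assms(1) fin(1) assms(2,3)]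
    by (intro trivial_kernel_generic[OF finite_flex_vars finite_flex_eqns _ _ assms(5)])
      (use assms(1-3) fin rat_poly_fun_flex_coeff in auto)
qed

section \<open>Genericity of affine rigidity\<close>

lemma pinned_flexes_trivial_if_affinely_rigid:
  fixes p :: "'v \<Rightarrow> real ^ 'd"
  assumes "finite V" "\<forall>h\<in>E. h \<subseteq> V" "B \<subseteq> V" "card B = CARD('d) + 1"
    and indep: "\<And>U. U \<subseteq> V \<Longrightarrow> card U \<le> CARD('d) + 1 \<Longrightarrow> affinely_independent p U"
    and rigid: "affinely_rigid V E p"
  shows "pinned_flexes_trivial V {h\<in>E. CARD('d) < card h} B p"
  unfolding pinned_flexes_trivial_def
proof (intro allI impI)
  fix r :: "'v \<Rightarrow> real ^ 'd" and A b
  assume "(\<forall>h\<in>{h\<in>E. CARD('d) < card h}. \<forall>u\<in>h. r u = A h *v p u + b h) \<and> (\<forall>u\<in>B. r u = 0)"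
  then have big: "\<And>h u. h \<in> E \<Longrightarrow> CARD('d) < card h \<Longrightarrow> u \<in> h \<Longrightarrow> r u = A h *v p u + b h"
    and pinned: "\<forall>u\<in>B. r u = 0"
    by auto
  have fin: "finite E" "\<And>h. h \<in> E \<Longrightarrow> finite h" "finite B"
    using assms(1-3) by (auto intro: finite_subset[of E "Pow V"] finite_subset)
  have "affine_function_of p h r" if "h \<in> E" for h
  proof (cases "CARD('d) < card h")
    case True
    then show ?thesis
      using big that unfolding affine_function_of_def by blast
  next
    case False
    then show ?thesis
      using indep assms(2) that fin(2) by (intro affinely_independent_affine_function_of) auto
  qed
  with not_affinely_rigid_if_nonaffine_flex[OF fin(1)] rigid
  obtain G c where G: "\<forall>u\<in>V. r u = G *v p u + c"
    unfolding affine_function_of_def by blast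
  have "G *v p u + c = 0" if "u \<in> B" for u
    using G pinned assms(3) that by (metis subsetD)
  then have "G = 0 \<and> c = 0"
    using assms(3,4) fin(3) indep[OF assms(3)] by (intro affinely_independent_affine_eq_0[of p B]) auto
  with G have r0: "\<forall>u\<in>V. r u = 0"
    by simp
  have "A h = 0 \<and> b h = 0" if h: "h \<in> E" "CARD('d) < card h" for h
  proof -
    obtain U where U: "U \<subseteq> h" "card U = CARD('d) + 1" "finite U"
      using h(2) obtain_subset_with_card_n[of "CARD('d) + 1" h] by auto
    moreover have "U \<subseteq> V"
      using U(1) assms(2) h(1) by blast
    moreover have "A h *v p u + b h = 0" if "u \<in> U" for u
      using big[OF h] r0 U(1) \<open>U \<subseteq> V\<close> that by (metis subsetD)
    ultimately show ?thesis
      using indep by (intro affinely_independent_affine_eq_0[of p U]) auto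
  qed
  with r0 show "(\<forall>u\<in>V. r u = 0) \<and> (\<forall>h\<in>{h\<in>E. CARD('d) < card h}. A h = 0 \<and> b h = 0)"
    by auto
qed

lemma affinely_rigid_if_pinned_flexes_trivial:
  fixes p :: "'v \<Rightarrow> real ^ 'd"
  assumes "finite V" "\<forall>h\<in>E. h \<subseteq> V" "B \<subseteq> V" "card B = CARD('d) + 1" "CARD('d) + 1 < card V"
    and "affinely_independent p B"
    and triv: "pinned_flexes_trivial V {h\<in>E. CARD('d) < card h} B p"
  shows "affinely_rigid V E p"
  unfolding affinely_rigid_def
proof (intro allI impI)
  fix q assume "affinely_equivalent E p q"
  then obtain G c where G: "\<And>h. h \<in> E \<Longrightarrow> invertible (G h) \<and> (\<forall>u\<in>h. q u = G h *v p u + c h)"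
    unfolding affinely_equivalent_def invertible_affine_def by metis
  have "finite B"
    using assms(1,3) finite_subset by blast
  then obtain A0 b0 where A0: "\<forall>u\<in>B. q u = A0 *v p u + b0"
    using affinely_independent_affine_function_of[OF assms(6)] unfolding affine_function_of_def by blast
  \<comment> \<open>the difference of q and the affine map fitted on B is a flex pinned on B\<close>
  let ?r = "\<lambda>u. q u - (A0 *v p u + b0)"
  have edge: "?r u = (G h - A0) *v p u + (c h - b0)" if "h \<in> {h\<in>E. CARD('d) < card h}" "u \<in> h" for h u
    using G that by (auto simp: matrix_vector_mult_diff_rdistrib algebra_simps)
  have pin: "?r u = 0" if "u \<in> B" for u
    using A0 that by simp
  note flex = pinned_flexes_trivialD[where r = ?r and A = "\<lambda>h. G h - A0" and b = "\<lambda>h. c h - b0",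
      OF triv edge pin]
  have q: "\<forall>u\<in>V. q u = A0 *v p u + b0"
    using flex(1) by simp
  have G_eq: "G h = A0" if "h \<in> E" "CARD('d) < card h" for h
    using flex(2) that by simp
  have "\<not> V \<subseteq> B"
    using card_mono[OF \<open>finite B\<close>, of V] assms(4,5) by linarith
  with triv have "{h\<in>E. CARD('d) < card h} \<noteq> {}"
    by (rule pinned_flexes_trivial_nonempty)
  then obtain h0 where "h0 \<in> E" "CARD('d) < card h0"
    by blast
  then have "invertible A0"
    using G G_eq by metis
  with q show "affinely_congruent V p q"
    unfolding affinely_congruent_def invertible_affine_def
    by (intro exI[of _ "\<lambda>x. A0 *v x + b0"]) auto
qed

lemma affinely_rigid_generic_transfer:
  fixes p1 p2 :: "'v \<Rightarrow> real ^ 'd"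
  assumes "finite V" "\<forall>h\<in>E. h \<subseteq> V"
    and gen: "generic_config V p1" "generic_config V p2"
    and rigid: "affinely_rigid V E p1"
  shows "affinely_rigid V E p2"
proof (cases "card V \<le> CARD('d) + 1")
  case True
  then obtain \<phi> where "invertible_affine \<phi>" "\<forall>u\<in>V. \<phi> (p1 u) = p2 u"
    using affinely_independent_invertible_affine generic_config_affinely_independent[OF _ assms(1) subset_refl]
      gen assms(1) by metis
  then show ?thesis
    using affinely_rigid_invertible_affine_image assms(2) rigid by blast
next
  case False
  then obtain B where B: "B \<subseteq> V" "card B = CARD('d) + 1"
    using obtain_subset_with_card_n[of "CARD('d) + 1" V] by auto
  let ?F = "{h\<in>E. CARD('d) < card h}"
  have "\<forall>h\<in>?F. h \<subseteq> V"
    using assms(2) by blast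
  moreover have "pinned_flexes_trivial V ?F B p1"
    using generic_config_affinely_independent[OF gen(1) assms(1)] assms(1,2) B rigid
    by (intro pinned_flexes_trivial_if_affinely_rigid) auto
  ultimately have "pinned_flexes_trivial V ?F B p2"
    using pinned_flexes_trivial_generic assms(1) B(1) gen(2) by blast
  then show ?thesis
    using generic_config_affinely_independent[OF gen(2) assms(1) B(1)] assms(1,2) B False
    by (intro affinely_rigid_if_pinned_flexes_trivial) auto
qed

theorem corollary3p9:
  fixes V :: "'v set" and E :: "'v set set"
  assumes "finite V" and "\<forall>h\<in>E. h \<subseteq> V"
  shows "(\<forall>p :: 'v \<Rightarrow> real ^ 'd. generic_config V p \<longrightarrow> affinely_rigid V E p) \<or>
         (\<forall>p :: 'v \<Rightarrow> real ^ 'd. generic_config V p \<longrightarrow> \<not> affinely_rigid V E p)"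
  using affinely_rigid_generic_transfer[OF assms] by blast

end
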